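(* Let $M$ be a monoid that embeds into a group $G$ (identify $M$ with its image in $G$). Suppose that $\mathbb Z^{+}[M]$ has nonzero common right multiples. Then for any $a,b\in M$ there exist $k\ge 1$ and signs $\epsilon_1,\delta_1,\ldots,\epsilon_k,\delta_k\in\{1,-1\}$ such that $a^{\epsilon_1}b^{\delta_1}a^{\epsilon_2}b^{\delta_2}\cdots a^{\epsilon_k}b^{\delta_k}=1$ holds in $G$.
   Context: For a monoid $M$, $\mathbb Z^{+}[M]$ denotes the set of elements of the monoid ring $\mathbb Z[M]$ that are linear combinations of elements of $M$ with positive integer coefficients, together with $0$; it is closed under multiplication. We say $\mathbb Z^{+}[M]$ has nonzero common right multiples (satisfies the Ore condition) if for any $p,q\in\mathbb Z^{+}[M]$ there exist $u,v\in\mathbb Z^{+}[M]$, not both zero, with $pu=qv$. *)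

theory Defs
  imports "HOL-Algebra.Group"
begin

text \<open>Z^+[M] for a submonoid M of a group G: finitely supported functions
  M -> nat (nonnegative integer coefficients; the zero function is 0).\<close>
definition pos_monoid_ring :: "'a set \<Rightarrow> ('a \<Rightarrow> nat) set" where
  "pos_monoid_ring M = {p. finite {x. p x \<noteq> 0} \<and> {x. p x \<noteq> 0} \<subseteq> M}"

definition ring_conv :: "('a, 'b) monoid_scheme \<Rightarrow> ('a \<Rightarrow> nat) \<Rightarrow> ('a \<Rightarrow> nat) \<Rightarrow> 'a \<Rightarrow> nat" where
  "ring_conv G p q g =
     (\<Sum>(x, y) \<in> {(x, y). p x \<noteq> 0 \<and> q y \<noteq> 0 \<and> x \<otimes>\<^bsub>G\<^esub> y = g}. p x * q y)"

definition has_nonzero_common_right_multiples :: "('a, 'b) monoid_scheme \<Rightarrow> 'a set \<Rightarrow> bool" where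
  "has_nonzero_common_right_multiples G M \<longleftrightarrow>
     (\<forall>p \<in> pos_monoid_ring M. \<forall>q \<in> pos_monoid_ring M.
        \<exists>u \<in> pos_monoid_ring M. \<exists>v \<in> pos_monoid_ring M.
          (u \<noteq> (\<lambda>_. 0) \<or> v \<noteq> (\<lambda>_. 0)) \<and> ring_conv G p u = ring_conv G q v)"

fun alt_word :: "('a, 'b) monoid_scheme \<Rightarrow> 'a \<Rightarrow> 'a \<Rightarrow> (int \<times> int) list \<Rightarrow> 'a" where
  "alt_word G a b [] = \<one>\<^bsub>G\<^esub>"
| "alt_word G a b ((e, d) # es) =
     (a [^]\<^bsub>G\<^esub> e) \<otimes>\<^bsub>G\<^esub> (b [^]\<^bsub>G\<^esub> d) \<otimes>\<^bsub>G\<^esub> alt_word G a b es"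

end

theory Submission
  imports Defs
begin

text \<open>Take p = 1 + a and q = 1 + b and a nonzero solution of (1 + a) u = (1 + b) v.
  Coefficients are nonnegative, so nothing cancels and the support S of this common
  multiple is both U \<union> aU and V \<union> bV, where U and V are the supports of u and v. S is
  finite and nonempty, and every s \<in> S can be moved inside S by a or by a\<inverse>, and
  likewise by b or by b\<inverse>. Alternating such moves defines a self-map of the finite
  set S; an orbit returns to a point it has visited, and the moves made in between
  multiply to 1.\<close>

lemma funpow_orbit_repeats:
  assumes "finite S" and "f ` S \<subseteq> S" and "s \<in> S"
  obtains i j where "i < j" and "(f ^^ i) s = (f ^^ j) s"
proof -
  have "(f ^^ n) s \<in> S" for n
    using assms(2,3) by (induction n) auto
  then have "range (\<lambda>n. (f ^^ n) s) \<subseteq> S"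
    by blast
  then have "finite (range (\<lambda>n. (f ^^ n) s))"
    using assms(1) by (rule finite_subset)
  then have "\<not> inj (\<lambda>n. (f ^^ n) s)"
    using finite_imageD by blast
  then obtain i j where "i \<noteq> j" and "(f ^^ i) s = (f ^^ j) s"
    unfolding inj_def by blast
  then show ?thesis
    using that by (metis linorder_neqE_nat)
qed

context group
begin

lemma alt_word_closed:
  assumes "a \<in> carrier G" and "b \<in> carrier G"
  shows "alt_word G a b es \<in> carrier G"
  using assms by (induction es) auto

lemma alt_word_append:
  assumes "a \<in> carrier G" and "b \<in> carrier G"
  shows "alt_word G a b (xs @ ys) = alt_word G a b xs \<otimes> alt_word G a b ys"
  using assms by (induction xs) (auto simp: m_assoc alt_word_closed)

lemma alt_word_telescope:
  assumes "a \<in> carrier G" and "b \<in> carrier G"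
    and "\<And>k. k \<le> n \<Longrightarrow> x k \<in> carrier G"
    and "\<And>k. k < n \<Longrightarrow> alt_word G a b [w k] \<otimes> x (Suc k) = x k"
  shows "alt_word G a b (map w [0..<n]) \<otimes> x n = x 0"
  using assms(3,4)
proof (induction n)
  case 0
  then show ?case by simp
next
  case (Suc n)
  have "alt_word G a b (map w [0..<Suc n]) \<otimes> x (Suc n)
      = alt_word G a b (map w [0..<n]) \<otimes> (alt_word G a b [w n] \<otimes> x (Suc n))"
    using Suc.prems(1) assms(1,2) by (simp add: alt_word_append alt_word_closed m_assoc)
  also have "\<dots> = x 0"
    using Suc by simp
  finally show ?case .
qed

lemma alt_word_eq_one_of_finite_invariant:
  assumes "finite S" and "S \<subseteq> carrier G" and "S \<noteq> {}"
    and a: "a \<in> carrier G" and b: "b \<in> carrier G"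
    and a_step: "\<And>s. s \<in> S \<Longrightarrow> \<exists>e::int. e \<in> {1, -1} \<and> a [^] e \<otimes> s \<in> S"
    and b_step: "\<And>s. s \<in> S \<Longrightarrow> \<exists>d::int. d \<in> {1, -1} \<and> b [^] d \<otimes> s \<in> S"
  shows "\<exists>es :: (int \<times> int) list. length es \<ge> 1 \<and>
           (\<forall>(e, d) \<in> set es. e \<in> {1, -1} \<and> d \<in> {1, -1}) \<and>
           alt_word G a b es = \<one>"
proof -
  obtain E :: "'a \<Rightarrow> int" where E: "\<And>s. s \<in> S \<Longrightarrow> E s \<in> {1, -1} \<and> a [^] E s \<otimes> s \<in> S"
    using a_step by metis
  obtain D :: "'a \<Rightarrow> int" where D: "\<And>s. s \<in> S \<Longrightarrow> D s \<in> {1, -1} \<and> b [^] D s \<otimes> s \<in> S"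
    using b_step by metis
  define half where "half s = a [^] E s \<otimes> s" for s
  define f where "f s = b [^] D (half s) \<otimes> half s" for s
  define sg where "sg s = (- E s, - D (half s))" for s
  have half_S: "half s \<in> S" if "s \<in> S" for s
    using E that unfolding half_def by blast
  have f_S: "f ` S \<subseteq> S"
    using D half_S unfolding f_def by blast
  have orbit_S: "(f ^^ n) s \<in> S" if "s \<in> S" for n s
    using that f_S by (induction n) auto
  have step_back: "alt_word G a b [sg s] \<otimes> f s = s" if "s \<in> S" for s
  proof -
    have s: "s \<in> carrier G" and h: "half s \<in> carrier G"
      using that half_S assms(2) by auto
    have "alt_word G a b [sg s] \<otimes> f s
        = a [^] (- E s) \<otimes> (b [^] (- D (half s)) \<otimes> (b [^] D (half s) \<otimes> half s))"
      unfolding sg_def f_def using a b h by (simp add: m_assoc)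
    also have "\<dots> = a [^] (- E s) \<otimes> half s"
      using b h by (simp add: int_pow_neg m_assoc[symmetric])
    also have "\<dots> = s"
      unfolding half_def using a s by (simp add: int_pow_neg m_assoc[symmetric])
    finally show ?thesis .
  qed
  obtain s0 where s0: "s0 \<in> S"
    using assms(3) by blast
  obtain i j where ij: "i < j" and cycle: "(f ^^ i) s0 = (f ^^ j) s0"
    using funpow_orbit_repeats[OF assms(1) f_S s0] .
  define x where "x k = (f ^^ (i + k)) s0" for k
  define es where "es = map (sg \<circ> x) [0..<j - i]"
  have x_S: "x k \<in> S" for k
    unfolding x_def using orbit_S s0 by blast
  have "alt_word G a b es \<otimes> x (j - i) = x 0"
    unfolding es_def
  proof (rule alt_word_telescope[OF a b])
    show "x k \<in> carrier G" for k
      using x_S assms(2) by blast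
    show "alt_word G a b [(sg \<circ> x) k] \<otimes> x (Suc k) = x k" for k
      using step_back[OF x_S] by (simp add: x_def)
  qed
  moreover have "x (j - i) = x 0"
    using ij cycle by (simp add: x_def)
  ultimately have "alt_word G a b es = \<one>"
    using x_S assms(2) a b by (metis alt_word_closed r_cancel_one' subsetD)
  moreover have "\<forall>(e, d) \<in> set es. e \<in> {1, -1} \<and> d \<in> {1, -1}"
    unfolding es_def sg_def using E D half_S x_S by force
  moreover have "length es \<ge> 1"
    using ij by (simp add: es_def)
  ultimately show ?thesis by blast
qed

lemma pm_step_in_union_translate:
  assumes "c \<in> carrier G" and "Y \<subseteq> carrier G" and "s \<in> Y \<union> (\<otimes>) c ` Y"
  shows "\<exists>e::int. e \<in> {1, -1} \<and> c [^] e \<otimes> s \<in> Y \<union> (\<otimes>) c ` Y"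
  using assms(3)
proof
  assume "s \<in> Y"
  then show ?thesis
    using assms(1) by (intro exI[of _ 1]) auto
next
  assume "s \<in> (\<otimes>) c ` Y"
  then obtain y where "y \<in> Y" and "s = c \<otimes> y" by blast
  moreover have "c [^] (-1::int) \<otimes> (c \<otimes> y) = y" if "y \<in> carrier G" for y
    using assms(1) that by (simp add: int_pow_neg m_assoc[symmetric])
  ultimately show ?thesis
    using assms(2) by (intro exI[of _ "-1"]) auto
qed

lemma alt_word_eq_one_of_common_support:
  assumes a: "a \<in> carrier G" and b: "b \<in> carrier G"
    and U: "finite U" "U \<subseteq> carrier G" and V: "V \<subseteq> carrier G"
    and nonempty: "U \<noteq> {} \<or> V \<noteq> {}"
    and common: "U \<union> (\<otimes>) a ` U = V \<union> (\<otimes>) b ` V"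
  shows "\<exists>es :: (int \<times> int) list. length es \<ge> 1 \<and>
           (\<forall>(e, d) \<in> set es. e \<in> {1, -1} \<and> d \<in> {1, -1}) \<and>
           alt_word G a b es = \<one>"
proof (rule alt_word_eq_one_of_finite_invariant[OF _ _ _ a b])
  show "finite (U \<union> (\<otimes>) a ` U)" and "U \<union> (\<otimes>) a ` U \<subseteq> carrier G"
    using U a by auto
  show "U \<union> (\<otimes>) a ` U \<noteq> {}"
    using nonempty common by auto
  show "\<exists>e::int. e \<in> {1, -1} \<and> a [^] e \<otimes> s \<in> U \<union> (\<otimes>) a ` U"
    if "s \<in> U \<union> (\<otimes>) a ` U" for s
    using pm_step_in_union_translate[OF a U(2) that] .
  show "\<exists>d::int. d \<in> {1, -1} \<and> b [^] d \<otimes> s \<in> U \<union> (\<otimes>) a ` U"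
    if "s \<in> U \<union> (\<otimes>) a ` U" for s
    using pm_step_in_union_translate[OF b V] that unfolding common .
qed

end

lemma ring_conv_support:
  assumes "finite {x. p x \<noteq> 0}" and "finite {y. u y \<noteq> 0}"
  shows "{g. ring_conv G p u g \<noteq> 0}
       = (\<lambda>(x, y). x \<otimes>\<^bsub>G\<^esub> y) ` ({x. p x \<noteq> 0} \<times> {y. u y \<noteq> 0})"
proof -
  have fin: "finite {(x, y). p x \<noteq> 0 \<and> u y \<noteq> 0 \<and> x \<otimes>\<^bsub>G\<^esub> y = g}" for g
    by (rule finite_subset[of _ "{x. p x \<noteq> 0} \<times> {y. u y \<noteq> 0}"]) (use assms in auto)
  have "ring_conv G p u g \<noteq> 0 \<longleftrightarrow> (\<exists>x y. p x \<noteq> 0 \<and> u y \<noteq> 0 \<and> x \<otimes>\<^bsub>G\<^esub> y = g)" for g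
    unfolding ring_conv_def using fin[of g] by (auto simp: sum_eq_0_iff)
  then show ?thesis by auto
qed

definition one_plus :: "('a, 'b) monoid_scheme \<Rightarrow> 'a \<Rightarrow> 'a \<Rightarrow> nat" where
  "one_plus G a x = (if x = \<one>\<^bsub>G\<^esub> then 1 else 0) + (if x = a then 1 else 0)"

lemma one_plus_support: "{x. one_plus G a x \<noteq> 0} = {\<one>\<^bsub>G\<^esub>, a}"
  unfolding one_plus_def by auto

lemma one_plus_in_pos_monoid_ring:
  assumes "submonoid M G" and "a \<in> M"
  shows "one_plus G a \<in> pos_monoid_ring M"
  unfolding pos_monoid_ring_def mem_Collect_eq one_plus_support
  using submonoid.one_closed[OF assms(1)] assms(2) by simp

lemma (in monoid) ring_conv_one_plus_support:
  assumes "a \<in> carrier G" and "M \<subseteq> carrier G" and "u \<in> pos_monoid_ring M"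
  shows "{g. ring_conv G (one_plus G a) u g \<noteq> 0}
       = {y. u y \<noteq> 0} \<union> (\<otimes>) a ` {y. u y \<noteq> 0}"
proof -
  have u: "finite {y. u y \<noteq> 0}" "{y. u y \<noteq> 0} \<subseteq> carrier G"
    using assms(2,3) unfolding pos_monoid_ring_def by auto
  have p: "finite {x. one_plus G a x \<noteq> 0}"
    unfolding one_plus_support by simp
  show ?thesis
    unfolding ring_conv_support[OF p u(1)] one_plus_support using u(2) by force
qed

theorem lemma1:
  fixes G :: "('a, 'b) monoid_scheme" and M :: "'a set"
  assumes "group G"
    and "submonoid M G"
    and "has_nonzero_common_right_multiples G M"
    and "a \<in> M" and "b \<in> M"
  shows "\<exists>es :: (int \<times> int) list. length es \<ge> 1 \<and>
           (\<forall>(e, d) \<in> set es. e \<in> {1, -1} \<and> d \<in> {1, -1}) \<and>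
           alt_word G a b es = \<one>\<^bsub>G\<^esub>"
proof -
  interpret group G by fact
  have M: "M \<subseteq> carrier G" and ab: "a \<in> carrier G" "b \<in> carrier G"
    using assms(2,4,5) submonoid.subset by blast+
  obtain u v where u: "u \<in> pos_monoid_ring M" and v: "v \<in> pos_monoid_ring M"
    and nonzero: "u \<noteq> (\<lambda>_. 0) \<or> v \<noteq> (\<lambda>_. 0)"
    and eq: "ring_conv G (one_plus G a) u = ring_conv G (one_plus G b) v"
    using assms(3) one_plus_in_pos_monoid_ring[OF assms(2)] assms(4,5)
    unfolding has_nonzero_common_right_multiples_def by blast
  have "{y. u y \<noteq> 0} \<union> (\<otimes>\<^bsub>G\<^esub>) a ` {y. u y \<noteq> 0}
      = {y. v y \<noteq> 0} \<union> (\<otimes>\<^bsub>G\<^esub>) b ` {y. v y \<noteq> 0}"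
    using ring_conv_one_plus_support[OF ab(1) M u] ring_conv_one_plus_support[OF ab(2) M v] eq
    by metis
  moreover have "finite {y. u y \<noteq> 0}" "{y. u y \<noteq> 0} \<subseteq> carrier G" "{y. v y \<noteq> 0} \<subseteq> carrier G"
    using u v M unfolding pos_monoid_ring_def by auto
  moreover have "{y. u y \<noteq> 0} \<noteq> {} \<or> {y. v y \<noteq> 0} \<noteq> {}"
    using nonzero by auto
  ultimately show ?thesis
    using alt_word_eq_one_of_common_support[OF ab] by blast
qed

end
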